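(* Let $N\ge 1$ be an integer, $\alpha\in(0,1]$, and $\lambda,c$ real constants with $c>0$. Consider the $N$-dimensional fractional Klein–Gordon equation $$\left(\frac{\partial^2}{\partial t^2}-c^2\Delta\right)^{\alpha}u_{\alpha}(\mathbf{x},t)=-\lambda^2u_{\alpha}(\mathbf{x},t),\qquad \mathbf{x}=(x_1,\dots,x_N)\in\mathbb{R}^N,$$ for functions of the form $u_\alpha(\mathbf{x},t)=f(w)$ with $w=\left(c^2t^2-\sum_{j=1}^N x_j^2\right)^{1/2}>0$, for which the equation means $$\left(\frac{d^2}{dw^2}+\frac{N}{w}\frac{d}{dw}\right)^{\alpha}f(w)=-\frac{\lambda^2}{c^{2\alpha}}f(w),\quad\text{where}\quad \left(\frac{d^2}{dw^2}+\frac{N}{w}\frac{d}{dw}\right)^{\alpha}f(w):=4^{\alpha}w^{-2\alpha}I_2^{0,-\alpha}I_2^{\frac{N-1}{2},-\alpha}f(w).$$ Then a solution is given by $$u_\alpha(\mathbf{x},t)=\sum_{k=0}^{\infty}\left(\frac{\lambda}{2^{\alpha}c^{\alpha}}\right)^{2k}\frac{(-1)^k\left(c^2t^2-\sum_{j=1}^N x_j^2\right)^{\alpha k+\alpha-1}}{\Gamma\!\left(\alpha k+\alpha+\frac{N-1}{2}\right)\Gamma(\alpha k+\alpha)} =\left(c^2t^2-\sum_{j=1}^N x_j^2\right)^{\alpha-1}E^{(2)}_{(\alpha,\alpha),(\alpha,\alpha+\frac{N-1}{2})}\!\left[-\left(\frac{\lambda\left(c^2t^2-\sum_{j=1}^N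 x_j^2\right)^{\alpha/2}}{2^{\alpha}c^{\alpha}}\right)^{2}\right].$$
   Context: Erdélyi–Kober operators (McBride's notation): for $m>0$, $\eta\in\mathbb{R}$ and $\alpha>0$, $$I_m^{\eta,\alpha}f(x)=\frac{x^{-m\eta-m\alpha}}{\Gamma(\alpha)}\int_0^x(x^m-u^m)^{\alpha-1}u^{m\eta}f(u)\,d(u^m),$$ and for $\alpha\le 0$ recursively $I_m^{\eta,\alpha}f=(\eta+\alpha+1)I_m^{\eta,\alpha+1}f+\frac{1}{m}I_m^{\eta,\alpha+1}\left(x\frac{d}{dx}f\right)$. The fractional operator in $w$ is McBride's fractional power of the hyper-Bessel operator $w^{-N}\frac{d}{dw}w^{N}\frac{d}{dw}$ (parameters $a_1=-N,a_2=N,a_3=0$, $m=2$, $b_1=\frac{N-1}{2}$, $b_2=0$); the change of variable $w$ turns $\frac{\partial^2}{\partial t^2}-c^2\Delta$ acting on $f(w)$ into $c^2\left(\frac{d^2}{dw^2}+\frac{N}{w}\frac{d}{dw}\right)f$. The multi-index Mittag-Leffler function is $E^{(n)}_{(\alpha_i)^n,(\mu_i)^n}(z)=\sum_{k=0}^\infty\frac{z^k}{\Gamma(\alpha_1k+\mu_1)\cdots\Gamma(\alpha_nk+\mu_n)}$. *)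

theory Defs
  imports "HOL-Analysis.Analysis"
begin

text \<open>Erdelyi--Kober operator (McBride) for order alpha > 0:
  I_m^{eta,alpha} f(x) = x^(-m eta - m alpha)/Gamma(alpha) *
     int_0^x (x^m - u^m)^(alpha-1) u^(m eta) f(u) d(u^m),
  with d(u^m) = m u^(m-1) du.\<close>
definition EK_pos :: "real \<Rightarrow> real \<Rightarrow> real \<Rightarrow> (real \<Rightarrow> real) \<Rightarrow> real \<Rightarrow> real" where
  "EK_pos m \<eta> \<alpha> f x =
     x powr (- m * \<eta> - m * \<alpha>) / Gamma \<alpha> *
     integral {0..x} (\<lambda>u. (x powr m - u powr m) powr (\<alpha> - 1) * u powr (m * \<eta>) * f u
                           * (m * u powr (m - 1)))"

fun EK_rec :: "nat \<Rightarrow> real \<Rightarrow> real \<Rightarrow> real \<Rightarrow> (real \<Rightarrow> real) \<Rightarrow> real \<Rightarrow> real" where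
  "EK_rec 0 m \<eta> \<alpha> f x = EK_pos m \<eta> \<alpha> f x"
| "EK_rec (Suc n) m \<eta> \<alpha> f x =
     (\<eta> + \<alpha> + 1) * EK_rec n m \<eta> (\<alpha> + 1) f x
     + (1 / m) * EK_rec n m \<eta> (\<alpha> + 1) (\<lambda>u. u * deriv f u) x"

definition EK :: "real \<Rightarrow> real \<Rightarrow> real \<Rightarrow> (real \<Rightarrow> real) \<Rightarrow> real \<Rightarrow> real" where
  "EK m \<eta> \<alpha> f x =
     (if \<alpha> > 0 then EK_pos m \<eta> \<alpha> f x
      else EK_rec (nat (\<lfloor>- \<alpha>\<rfloor>) + 1) m \<eta> \<alpha> f x)"

definition frac_bessel_op :: "nat \<Rightarrow> real \<Rightarrow> (real \<Rightarrow> real) \<Rightarrow> real \<Rightarrow> real" where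
  "frac_bessel_op N \<alpha> f w =
     4 powr \<alpha> * w powr (- 2 * \<alpha>) *
     EK 2 0 (- \<alpha>) (EK 2 ((real N - 1) / 2) (- \<alpha>) f) w"

text \<open>Multi-index Mittag-Leffler function E^{(n)}_{(alpha_i),(mu_i)}(z), n = length of the lists.\<close>
definition multi_ML :: "real list \<Rightarrow> real list \<Rightarrow> real \<Rightarrow> real" where
  "multi_ML as mus z =
     (\<Sum>k. z ^ k / prod_list (map2 (\<lambda>a \<mu>. Gamma (a * real k + \<mu>)) as mus))"

text \<open>The claimed solution, as a function of s = c^2 t^2 - sum_j x_j^2 (= w^2).\<close>
definition KG_term :: "nat \<Rightarrow> real \<Rightarrow> real \<Rightarrow> real \<Rightarrow> real \<Rightarrow> nat \<Rightarrow> real" where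
  "KG_term N \<alpha> lam c s k =
     (lam / (2 powr \<alpha> * c powr \<alpha>)) ^ (2 * k) * (-1) ^ k * s powr (\<alpha> * real k + \<alpha> - 1)
     / (Gamma (\<alpha> * real k + \<alpha> + (real N - 1) / 2) * Gamma (\<alpha> * real k + \<alpha>))"

definition KG_sol :: "nat \<Rightarrow> real \<Rightarrow> real \<Rightarrow> real \<Rightarrow> real \<Rightarrow> real" where
  "KG_sol N \<alpha> lam c s = (\<Sum>k. KG_term N \<alpha> lam c s k)"

end

theory Submission
  imports Defs
begin

text \<open>
  Erdelyi--Kober operators act diagonally on power functions:
  \<open>I\<^sub>2\<^sup>\<eta>\<^sup>,\<^sup>\<alpha> u\<^sup>2\<^sup>r = \<Gamma>(\<eta>+r+1)/\<Gamma>(\<eta>+r+1+\<alpha>) u\<^sup>2\<^sup>r\<close>, for \<open>\<alpha> > 0\<close> by a Beta integral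
  and for \<open>\<alpha> \<le> 0\<close> by the defining recursion together with \<open>\<Gamma>(y+1) = y \<Gamma>(y)\<close>.
  By dominated convergence this extends termwise to functions
  \<open>u\<^sup>2\<^sup>b \<Sum> c\<^sub>n u\<^sup>2\<^sup>a\<^sup>n\<close> with entire coefficient series.  The claimed solution is such a
  function with \<open>a = \<alpha>\<close>, \<open>b = \<alpha> - 1\<close>; the two operators in the fractional Bessel
  operator kill its constant term and shift every other coefficient down by one index,
  multiplying it by \<open>-\<lambda>\<^sup>2/(4c\<^sup>2)\<^sup>\<alpha>\<close>; with the prefactor \<open>4\<^sup>\<alpha> w\<^sup>-\<^sup>2\<^sup>\<alpha>\<close> this is
  the eigenvalue equation.
  The coefficients decay like \<open>1/\<Gamma>(\<alpha>k)\<^sup>2\<close>, so all series converge everywhere.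
\<close>

section \<open>Beta and Gamma function facts\<close>

lemma Beta_real_pos: "0 < a \<Longrightarrow> 0 < b \<Longrightarrow> 0 < Beta a (b::real)"
  unfolding Beta_def by simp

lemma Gamma_div_Gamma_add_eq_Beta:
  fixes x \<beta> :: real
  assumes "0 < \<beta>"
  shows "Gamma x / Gamma (x + \<beta>) = Beta x \<beta> / Gamma \<beta>"
  using Gamma_real_pos[OF assms] unfolding Beta_def by (simp add: field_simps)

lemma mult_div_Gamma_plus1:
  fixes y z :: real
  shows "y * (z / Gamma (y + 1)) = z / Gamma y"
  using rGamma_plus1[of y] by (simp add: divide_inverse rGamma_inverse_Gamma[symmetric] mult_ac)

lemma Beta_tendsto_0:
  fixes a y \<beta> :: real
  assumes a: "0 < a" and y: "0 < y" and \<beta>: "0 < \<beta>"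
  shows "(\<lambda>k. Beta (a * real k + y) \<beta>) \<longlonglongrightarrow> 0"
proof -
  define B where "B k t = t powr (a * real k + y - 1) * (1 - t) powr (\<beta> - 1)" for k t
  have B_int: "(B k has_integral Beta (a * real k + y) \<beta>) {0..1}" for k
    unfolding B_def using a y \<beta> by (intro has_integral_Beta_real) (auto intro: add_nonneg_pos)
  have B_le: "norm (B k t) \<le> t powr (y - 1) * (1 - t) powr (\<beta> - 1)" if "t \<in> {0..1}" for k t
    unfolding B_def using that a by (auto intro!: mult_right_mono powr_mono')
  have B_lim: "(\<lambda>k. B k t) \<longlonglongrightarrow> 0" if "t \<in> {0..1}" for t
  proof (cases "t = 0 \<or> t = 1")
    case True
    then show ?thesis by (auto simp: B_def)
  next
    case False
    with that have t: "0 < t" "t < 1" by auto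
    have "B k t = t powr (y - 1) * (1 - t) powr (\<beta> - 1) * (t powr a) ^ k" for k
      using t by (simp add: B_def powr_power powr_add[symmetric] algebra_simps)
    moreover have "t powr a < 1"
      using powr_less_mono2[of a t 1] t a by simp
    then have "(\<lambda>k. (t powr a) ^ k) \<longlonglongrightarrow> 0"
      by (intro LIMSEQ_realpow_zero) auto
    ultimately show ?thesis
      by (simp add: tendsto_mult_right_zero)
  qed
  have "(\<lambda>k. integral {0..1} (B k)) \<longlonglongrightarrow> integral {0..1} (\<lambda>t::real. 0::real)"
    using dominated_convergence(2)[OF _ integrable_Beta'[OF y \<beta>] B_le B_lim] B_int
    by (auto simp: integrable_on_def)
  moreover have "integral {0..1} (B k) = Beta (a * real k + y) \<beta>" for k
    using B_int by (rule integral_unique)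
  ultimately show ?thesis
    by simp
qed

lemma summable_div_Gamma_Gamma:
  fixes \<alpha> \<mu> \<nu> M :: real
  assumes \<alpha>: "0 < \<alpha>" and \<mu>: "0 < \<mu>" and \<nu>: "0 < \<nu>"
  shows "summable (\<lambda>k. M ^ k / (Gamma (\<alpha> * real k + \<mu>) * Gamma (\<alpha> * real k + \<nu>)))"
proof -
  define t where "t k = M ^ k / (Gamma (\<alpha> * real k + \<mu>) * Gamma (\<alpha> * real k + \<nu>))" for k
  define r where "r k = M * (Beta (\<alpha> * real k + \<mu>) \<alpha> / Gamma \<alpha>) * (Beta (\<alpha> * real k + \<nu>) \<alpha> / Gamma \<alpha>)"
    for k
  have pos: "0 < \<alpha> * real k + \<mu>" "0 < \<alpha> * real k + \<nu>" for k
    using \<alpha> \<mu> \<nu> by (simp_all add: add_nonneg_pos)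
  have step: "t (Suc k) = r k * t k" for k
  proof -
    have "0 < Gamma (\<alpha> * real k + \<mu>)" "0 < Gamma (\<alpha> * real k + \<nu>)"
      "0 < Gamma (\<alpha> * real k + \<mu> + \<alpha>)" "0 < Gamma (\<alpha> * real k + \<nu> + \<alpha>)"
      using pos[of k] \<alpha> by simp_all
    moreover have "\<alpha> * real (Suc k) + \<mu> = (\<alpha> * real k + \<mu>) + \<alpha>" "\<alpha> * real (Suc k) + \<nu> = (\<alpha> * real k + \<nu>) + \<alpha>"
      by (simp_all add: algebra_simps)
    ultimately show ?thesis
      unfolding t_def r_def Gamma_div_Gamma_add_eq_Beta[OF \<alpha>, symmetric]
      by (simp add: field_simps)
  qed
  have "Gamma \<alpha> \<noteq> 0"
    using Gamma_real_pos[OF \<alpha>] by linarith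
  then have "(\<lambda>k. \<bar>r k\<bar>) \<longlonglongrightarrow> \<bar>M * (0 / Gamma \<alpha>) * (0 / Gamma \<alpha>)\<bar>"
    unfolding r_def
    by (intro tendsto_intros Beta_tendsto_0) (use \<alpha> \<mu> \<nu> in auto)
  then have "eventually (\<lambda>k. \<bar>r k\<bar> < 1/2) sequentially"
    by (intro order_tendstoD) auto
  then obtain K where K: "\<And>k. K \<le> k \<Longrightarrow> \<bar>r k\<bar> < 1/2"
    by (auto simp: eventually_at_top_linorder)
  show ?thesis
    unfolding t_def[symmetric]
  proof (rule summable_ratio_test[of "1/2" K])
    fix k assume "K \<le> k"
    then have "\<bar>r k\<bar> * \<bar>t k\<bar> \<le> 1/2 * \<bar>t k\<bar>"
      using K by (intro mult_right_mono) (auto simp: less_imp_le)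
    then show "norm (t (Suc k)) \<le> 1/2 * norm (t k)"
      unfolding step by (simp add: abs_mult)
  qed simp
qed

lemma has_integral_Beta_substituted:
  fixes x p \<beta> :: real
  assumes x: "0 < x" and p: "0 < p" and \<beta>: "0 < \<beta>"
  shows "((\<lambda>u. ((u / x)\<^sup>2) powr (p - 1) * (1 - (u / x)\<^sup>2) powr (\<beta> - 1) * (2 * u / x\<^sup>2))
           has_integral Beta p \<beta>) {0..x}"
proof -
  define f where "f t = t powr (p - 1) * (1 - t) powr (\<beta> - 1)" for t :: real
  define g where "g u = (u / x)\<^sup>2" for u :: real
  define g' where "g' u = 2 * u / x\<^sup>2" for u :: real
  have int: "set_integrable lborel {g 0..g x} f"
    unfolding f_def g_def using integrable_Beta[OF p \<beta>] x by simp
  have dg: "(g has_real_derivative g' u) (at u)" for u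
    unfolding g_def g'_def using x
    by (auto intro!: derivative_eq_intros simp: power2_eq_square field_simps)
  have cg: "continuous_on {0..x} g'"
    unfolding g'_def by (intro continuous_intros) (use x in auto)
  have g'_nonneg: "u \<in> {0..x} \<Longrightarrow> 0 \<le> g' u" for u
    by (simp add: g'_def)
  note subst = integral_substitution[OF int dg cg g'_nonneg less_imp_le[OF x]]
  have si: "set_integrable lborel {0..x} (\<lambda>u. f (g u) * g' u)"
    using subst(1) x by simp
  have "(LINT t:{0..1}|lborel. f t) = (LINT u:{0..x}|lborel. f (g u) * g' u)"
    using subst(2) x by (simp add: set_lebesgue_integral_def g_def mult.commute)
  moreover have "(LINT t:{0..1}|lborel. f t) = Beta p \<beta>"
    using set_borel_integral_eq_integral(2)[OF integrable_Beta[OF p \<beta>]]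
      integral_unique[OF has_integral_Beta_real[OF p \<beta>]] by (simp add: f_def)
  ultimately have "((\<lambda>u. f (g u) * g' u) has_integral Beta p \<beta>) {0..x}"
    using set_borel_integral_eq_integral[OF si] by (metis has_integral_integral)
  then show ?thesis
    by (simp only: f_def g_def g'_def)
qed

lemma has_integral_Beta_quadratic:
  fixes x p \<beta> :: real
  assumes x: "0 < x" and p: "0 < p" and \<beta>: "0 < \<beta>"
  shows "((\<lambda>u. (x powr 2 - u powr 2) powr (\<beta> - 1) * u powr (2 * p - 1) * 2)
           has_integral x powr (2 * p + 2 * \<beta> - 2) * Beta p \<beta>) {0..x}"
proof (rule has_integral_spike_finite[where S = "{0, x}",
      OF _ _ has_integral_mult_right[OF has_integral_Beta_substituted[OF x p \<beta>]]])
  fix u assume "u \<in> {0..x} - {0, x}"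
  then have u: "0 < u" "u < x" by auto
  have quotient: "1 - (u / x)\<^sup>2 = (x powr 2 - u powr 2) / x powr 2"
    using u x by (simp add: field_simps)
  have "(1 - (u / x)\<^sup>2) powr (\<beta> - 1) = (x powr 2 - u powr 2) powr (\<beta> - 1) / (x powr 2) powr (\<beta> - 1)"
    unfolding quotient by (rule powr_divide)
  also have "(x powr 2) powr (\<beta> - 1) = x powr (2 * \<beta> - 2)"
    by (simp add: powr_powr algebra_simps)
  finally have A: "(1 - (u / x)\<^sup>2) powr (\<beta> - 1) = (x powr 2 - u powr 2) powr (\<beta> - 1) / x powr (2 * \<beta> - 2)" .
  have "((u / x)\<^sup>2) powr (p - 1) = ((u / x) powr 2) powr (p - 1)"
    using u x by (simp add: powr_numeral)
  also have "\<dots> = u powr (2 * p - 2) / x powr (2 * p - 2)"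
    by (simp add: powr_powr powr_divide algebra_simps)
  finally have B: "((u / x)\<^sup>2) powr (p - 1) = u powr (2 * p - 2) / x powr (2 * p - 2)" .
  have C: "u powr (2 * p - 1) = u powr (2 * p - 2) * u"
    using u powr_add[of u "2 * p - 2" 1] by simp
  have "x powr (2 * p + 2 * \<beta> - 2) = x powr (2 * p - 2) * x powr (2 * \<beta> - 2) * x powr 2"
    unfolding powr_add[symmetric] by (simp add: algebra_simps)
  also have "x powr 2 = x\<^sup>2"
    using x by (simp add: powr_numeral)
  finally have D: "x powr (2 * p + 2 * \<beta> - 2) = x powr (2 * p - 2) * x powr (2 * \<beta> - 2) * x\<^sup>2" .
  show "(x powr 2 - u powr 2) powr (\<beta> - 1) * u powr (2 * p - 1) * 2
      = x powr (2 * p + 2 * \<beta> - 2)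
        * (((u / x)\<^sup>2) powr (p - 1) * (1 - (u / x)\<^sup>2) powr (\<beta> - 1) * (2 * u / x\<^sup>2))"
    unfolding A B C D using u x by (simp add: field_simps)
qed simp

section \<open>Power series in \<open>u\<^sup>2\<^sup>a\<close> and their Erdelyi--Kober transforms\<close>

lemma summable_powser_mult_bounded:
  fixes c m :: "nat \<Rightarrow> real"
  assumes entire: "\<And>z. summable (\<lambda>n. c n * z ^ n)" and bound: "\<And>n. \<bar>m n\<bar> \<le> M"
  shows "summable (\<lambda>n. c n * m n * z ^ n)"
proof (rule summable_comparison_test)
  show "summable (\<lambda>n. M * norm (c n * z ^ n))"
    by (intro summable_mult powser_insidea[OF entire[of "\<bar>z\<bar> + 1"]]) simp
  have "norm (c n * m n * z ^ n) \<le> M * norm (c n * z ^ n)" for n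
    using mult_right_mono[OF bound[of n] norm_ge_zero[of "c n * z ^ n"]] by (simp add: abs_mult mult_ac)
  then show "\<exists>N. \<forall>n\<ge>N. norm (c n * m n * z ^ n) \<le> M * norm (c n * z ^ n)"
    by blast
qed

lemma norm_powser_partial_sum_le:
  fixes c :: "nat \<Rightarrow> real"
  assumes entire: "\<And>z. summable (\<lambda>n. c n * z ^ n)" and y: "norm y \<le> X"
  shows "norm (\<Sum>k<n. c k * y ^ k) \<le> (\<Sum>n. norm (c n * X ^ n))"
proof -
  have "norm (\<Sum>k<n. c k * y ^ k) \<le> (\<Sum>k<n. norm (c k * X ^ k))"
    using y by (intro order.trans[OF norm_sum] sum_mono)
      (auto simp: abs_mult power_abs intro!: mult_left_mono power_mono)
  also have "\<dots> \<le> (\<Sum>n. norm (c n * X ^ n))"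
    by (intro sum_le_suminf powser_insidea[OF entire[of "\<bar>X\<bar> + 1"]]) auto
  finally show ?thesis .
qed

lemma sums_integral_powser:
  fixes K \<phi> :: "'a::euclidean_space \<Rightarrow> real"
  assumes entire: "\<And>z. summable (\<lambda>n. c n * z ^ n)"
    and K: "K integrable_on S" "\<And>u. u \<in> S \<Longrightarrow> 0 \<le> K u"
    and \<phi>: "\<And>u. u \<in> S \<Longrightarrow> \<bar>\<phi> u\<bar> \<le> X"
    and I: "\<And>n. ((\<lambda>u. K u * \<phi> u ^ n) has_integral I n) S"
  shows "(\<lambda>n. c n * I n) sums integral S (\<lambda>u. K u * (\<Sum>n. c n * \<phi> u ^ n))"
proof -
  define Q where "Q = (\<Sum>n. norm (c n * X ^ n))"
  define P where "P n u = (\<Sum>k<n. c k * (K u * \<phi> u ^ k))" for n u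
  have P_eq: "P n u = K u * (\<Sum>k<n. c k * \<phi> u ^ k)" for n u
    by (simp add: P_def sum_distrib_left mult_ac)
  have P_int: "(P n has_integral (\<Sum>k<n. c k * I k)) S" for n
    unfolding P_def by (intro has_integral_sum has_integral_mult_right I) auto
  have P_le: "norm (P n u) \<le> Q * K u" if u: "u \<in> S" for n u
    using mult_left_mono[OF norm_powser_partial_sum_le[OF entire, of "\<phi> u" X n] K(2)[OF u]] \<phi>[OF u]
    unfolding P_eq Q_def by (simp add: abs_mult K(2)[OF u] mult_ac)
  have P_lim: "(\<lambda>n. P n u) \<longlonglongrightarrow> K u * (\<Sum>n. c n * \<phi> u ^ n)" for u
    unfolding P_eq by (intro tendsto_mult_left summable_LIMSEQ entire)
  have "(\<lambda>n. integral S (P n)) \<longlonglongrightarrow> integral S (\<lambda>u. K u * (\<Sum>n. c n * \<phi> u ^ n))"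
    using P_int P_le P_lim integrable_on_cmult_left[OF K(1), of Q]
    by (intro dominated_convergence(2)[where h = "\<lambda>u. Q * K u"]) (auto simp: integrable_on_def)
  moreover have "integral S (P n) = (\<Sum>k<n. c k * I k)" for n
    using P_int by (rule integral_unique)
  ultimately show ?thesis
    unfolding sums_def by simp
qed

definition has_powr_expansion :: "real \<Rightarrow> real \<Rightarrow> (nat \<Rightarrow> real) \<Rightarrow> (real \<Rightarrow> real) \<Rightarrow> bool" where
  "has_powr_expansion a b c f \<longleftrightarrow>
     (\<forall>z. summable (\<lambda>n. c n * z ^ n)) \<and>
     (\<forall>u>0. f u = u powr (2 * b) * (\<Sum>n. c n * (u powr (2 * a)) ^ n))"

lemma has_powr_expansion_cong:
  "has_powr_expansion a b c f \<Longrightarrow> (\<And>k. c k = d k) \<Longrightarrow> has_powr_expansion a b d f"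
  by (simp add: has_powr_expansion_def)

lemma has_powr_expansion_lincomb:
  assumes "has_powr_expansion a b c f" "has_powr_expansion a b d g"
  shows "has_powr_expansion a b (\<lambda>k. p * c k + q * d k) (\<lambda>u. p * f u + q * g u)"
proof -
  have c: "summable (\<lambda>n. c n * z ^ n)" and d: "summable (\<lambda>n. d n * z ^ n)" for z
    using assms unfolding has_powr_expansion_def by auto
  have sums: "(\<lambda>n. (p * c n + q * d n) * z ^ n) sums (p * (\<Sum>n. c n * z ^ n) + q * (\<Sum>n. d n * z ^ n))"
    for z
    using sums_add[OF sums_mult[OF summable_sums[OF c]] sums_mult[OF summable_sums[OF d]], of p z q]
    by (simp add: algebra_simps)
  show ?thesis
    unfolding has_powr_expansion_def
  proof (intro conjI allI impI)
    show "summable (\<lambda>n. (p * c n + q * d n) * z ^ n)" for z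
      using sums by (rule sums_summable)
    show "p * f u + q * g u = u powr (2 * b) * (\<Sum>n. (p * c n + q * d n) * (u powr (2 * a)) ^ n)"
      if "0 < u" for u
    proof -
      have "p * f u + q * g u
          = u powr (2 * b) * (p * (\<Sum>n. c n * (u powr (2 * a)) ^ n) + q * (\<Sum>n. d n * (u powr (2 * a)) ^ n))"
        using assms that by (simp add: has_powr_expansion_def algebra_simps)
      then show ?thesis
        using sums_unique[OF sums[of "u powr (2 * a)"]] by simp
    qed
  qed
qed

lemma powser_index_sums:
  fixes c :: "nat \<Rightarrow> real"
  assumes entire: "\<And>z. summable (\<lambda>n. c n * z ^ n)"
  shows "(\<lambda>n. real n * c n * z ^ n) sums (z * (\<Sum>n. diffs c n * z ^ n))"
proof -
  have "(\<lambda>n. z * (diffs c n * z ^ n)) sums (z * (\<Sum>n. diffs c n * z ^ n))"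
    by (intro sums_mult summable_sums termdiff_converges_all entire)
  then have "(\<lambda>n. real (Suc n) * c (Suc n) * z ^ Suc n) sums (z * (\<Sum>n. diffs c n * z ^ n))"
    by (simp add: diffs_def algebra_simps)
  then show ?thesis
    using sums_Suc_iff[of "\<lambda>n. real n * c n * z ^ n"] by simp
qed

lemma has_powr_expansion_Euler:
  assumes f: "has_powr_expansion a b c f"
  shows "has_powr_expansion a b (\<lambda>k. c k * (2 * b + 2 * a * real k)) (\<lambda>u. u * deriv f u)"
proof -
  have entire: "summable (\<lambda>n. c n * z ^ n)" for z
    using f unfolding has_powr_expansion_def by auto
  define P where "P z = (\<Sum>n. c n * z ^ n)" for z :: real
  define P' where "P' z = (\<Sum>n. diffs c n * z ^ n)" for z :: real
  have P_deriv: "(P has_real_derivative P' z) (at z)" for z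
    unfolding P_def P'_def by (rule termdiffs_strong_converges_everywhere[OF entire])
  have sums: "(\<lambda>n. c n * (2 * b + 2 * a * real n) * z ^ n) sums (2 * b * P z + 2 * a * (z * P' z))" for z
    using sums_add[OF sums_mult[OF summable_sums[OF entire[of z]], of "2 * b"]
        sums_mult[OF powser_index_sums[OF entire, of z], of "2 * a"]]
    by (simp add: P_def P'_def algebra_simps)
  show ?thesis
    unfolding has_powr_expansion_def
  proof (intro conjI allI impI)
    show "summable (\<lambda>n. c n * (2 * b + 2 * a * real n) * z ^ n)" for z
      using sums by (rule sums_summable)
    fix u :: real assume u: "0 < u"
    let ?f' = "2 * b * u powr (2 * b - 1) * P (u powr (2 * a))
               + P' (u powr (2 * a)) * (2 * a * u powr (2 * a - 1)) * u powr (2 * b)"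
    have "((\<lambda>v. P (v powr (2 * a))) has_real_derivative P' (u powr (2 * a)) * (2 * a * u powr (2 * a - 1))) (at u)"
      by (rule DERIV_chain2[OF P_deriv has_real_derivative_powr[OF u]])
    then have "((\<lambda>v. v powr (2 * b) * P (v powr (2 * a))) has_real_derivative ?f') (at u)"
      by (rule DERIV_mult[OF has_real_derivative_powr[OF u]])
    then have "(f has_real_derivative ?f') (at u)"
      by (rule has_field_derivative_transform_within_open[of _ _ _ "{0<..}"])
        (use u f in \<open>auto simp: has_powr_expansion_def P_def\<close>)
    then have "u * deriv f u
        = 2 * b * (u * u powr (2 * b - 1)) * P (u powr (2 * a))
          + 2 * a * (u * u powr (2 * a - 1)) * P' (u powr (2 * a)) * u powr (2 * b)"
      by (simp add: DERIV_imp_deriv algebra_simps)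
    also have "\<dots> = u powr (2 * b) * (2 * b * P (u powr (2 * a)) + 2 * a * (u powr (2 * a) * P' (u powr (2 * a))))"
      using u by (simp add: powr_mult_base algebra_simps)
    also have "\<dots> = u powr (2 * b) * (\<Sum>n. c n * (2 * b + 2 * a * real n) * (u powr (2 * a)) ^ n)"
      using sums_unique[OF sums] by simp
    finally show "u * deriv f u = u powr (2 * b) * (\<Sum>n. c n * (2 * b + 2 * a * real n) * (u powr (2 * a)) ^ n)" .
  qed
qed

lemma EK_pos_eq_integral:
  assumes f: "\<And>u. 0 < u \<Longrightarrow> f u = u powr (2 * b) * g u"
  shows "EK_pos 2 \<eta> \<beta> f x
       = x powr (- 2 * \<eta> - 2 * \<beta>) / Gamma \<beta>
         * integral {0..x} (\<lambda>u. (x powr 2 - u powr 2) powr (\<beta> - 1) * u powr (2 * (\<eta> + b + 1) - 1) * 2 * g u)"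
  unfolding EK_pos_def
proof (rule arg_cong[where f = "(*) _"], rule integral_cong)
  fix u assume u: "u \<in> {0..x}"
  show "(x powr 2 - u powr 2) powr (\<beta> - 1) * u powr (2 * \<eta>) * f u * (2 * u powr (2 - 1))
      = (x powr 2 - u powr 2) powr (\<beta> - 1) * u powr (2 * (\<eta> + b + 1) - 1) * 2 * g u"
  proof (cases "u = 0")
    case False
    with u have "0 < u" by simp
    have "u powr (2 * (\<eta> + b + 1) - 1) = u powr (2 * \<eta>) * u powr (2 * b) * u powr 1"
      unfolding powr_add[symmetric] by (simp add: algebra_simps)
    then show ?thesis
      using f[OF \<open>0 < u\<close>] by (simp add: mult_ac)
  qed simp
qed

text \<open>
  Each term of the series is integrated with the Beta integral above, which is where the
  multiplier \<open>B(\<eta>+b+ak+1,\<beta>)/\<Gamma>(\<beta>)\<close> comes from.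
\<close>

lemma EK_pos_sums:
  assumes f: "has_powr_expansion a b c f" and a: "0 < a" and \<eta>: "0 < \<eta> + b + 1"
    and \<beta>: "0 < \<beta>" and x: "0 < x"
  shows "(\<lambda>n. x powr (2 * b) * (c n * (Beta (\<eta> + b + a * real n + 1) \<beta> / Gamma \<beta>) * (x powr (2 * a)) ^ n))
           sums EK_pos 2 \<eta> \<beta> f x"
proof -
  have entire: "\<And>z. summable (\<lambda>n. c n * z ^ n)"
    and f_eq: "\<And>u. 0 < u \<Longrightarrow> f u = u powr (2 * b) * (\<Sum>n. c n * (u powr (2 * a)) ^ n)"
    using f unfolding has_powr_expansion_def by auto
  define p where "p n = \<eta> + b + a * real n + 1" for n
  have p_pos: "0 < p n" for n
    unfolding p_def using \<eta> mult_nonneg_nonneg[of a "real n"] a by linarith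
  define K where "K u = (x powr 2 - u powr 2) powr (\<beta> - 1) * u powr (2 * (\<eta> + b + 1) - 1) * 2" for u
  have K_powr: "K u * (u powr (2 * a)) ^ n = (x powr 2 - u powr 2) powr (\<beta> - 1) * u powr (2 * p n - 1) * 2"
    if "u \<in> {0..x}" for u n
    using that by (cases "u = 0") (auto simp: K_def p_def powr_power powr_add[symmetric] algebra_simps)
  have I: "((\<lambda>u. K u * (u powr (2 * a)) ^ n) has_integral x powr (2 * p n + 2 * \<beta> - 2) * Beta (p n) \<beta>) {0..x}"
    for n
    using has_integral_Beta_quadratic[OF x p_pos \<beta>] by (rule has_integral_eq[rotated]) (simp add: K_powr)
  have "(\<lambda>n. c n * (x powr (2 * p n + 2 * \<beta> - 2) * Beta (p n) \<beta>))
      sums integral {0..x} (\<lambda>u. K u * (\<Sum>n. c n * (u powr (2 * a)) ^ n))"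
    using I[of 0] x a
    by (intro sums_integral_powser[OF entire _ _ _ I, where X = "x powr (2 * a)"])
      (auto simp: integrable_on_def K_def intro: powr_mono2)
  from sums_mult[OF this, of "x powr (- 2 * \<eta> - 2 * \<beta>) / Gamma \<beta>"]
  have scaled: "(\<lambda>n. x powr (- 2 * \<eta> - 2 * \<beta>) / Gamma \<beta> * (c n * (x powr (2 * p n + 2 * \<beta> - 2) * Beta (p n) \<beta>)))
      sums EK_pos 2 \<eta> \<beta> f x"
    by (simp only: EK_pos_eq_integral[OF f_eq] K_def)
  have term_eq: "x powr (- 2 * \<eta> - 2 * \<beta>) / Gamma \<beta> * (c n * (x powr (2 * p n + 2 * \<beta> - 2) * Beta (p n) \<beta>))
      = x powr (2 * b) * (c n * (Beta (p n) \<beta> / Gamma \<beta>) * (x powr (2 * a)) ^ n)" for n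
    using x by (simp add: p_def powr_power powr_add[symmetric] algebra_simps)
  have "(\<lambda>n. x powr (2 * b) * (c n * (Beta (p n) \<beta> / Gamma \<beta>) * (x powr (2 * a)) ^ n))
      sums EK_pos 2 \<eta> \<beta> f x"
    using scaled unfolding term_eq .
  then show ?thesis
    by (simp only: p_def)
qed

lemma has_powr_expansion_EK_pos:
  assumes f: "has_powr_expansion a b c f" and a: "0 < a" and \<eta>: "0 < \<eta> + b + 1" and \<beta>: "0 < \<beta>"
  shows "has_powr_expansion a b
           (\<lambda>k. c k * (Gamma (\<eta> + b + a * real k + 1) / Gamma (\<eta> + b + a * real k + 1 + \<beta>)))
           (EK_pos 2 \<eta> \<beta> f)"
proof -
  define m where "m k = Beta (\<eta> + b + a * real k + 1) \<beta> / Gamma \<beta>" for k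
  have entire: "\<And>z. summable (\<lambda>n. c n * z ^ n)"
    using f unfolding has_powr_expansion_def by auto
  have m_bound: "\<bar>m k\<bar> \<le> m 0" for k
  proof -
    have "0 < \<eta> + b + a * real k + 1"
      using \<eta> mult_nonneg_nonneg[of a "real k"] a by linarith
    then have "0 < Beta (\<eta> + b + a * real k + 1) \<beta>" "Beta (\<eta> + b + a * real k + 1) \<beta> \<le> Beta (\<eta> + b + 1) \<beta>"
      using \<eta> \<beta> a by (auto intro!: Beta_real_pos Beta_real_mono)
    then show ?thesis
      unfolding m_def using \<beta> by (simp add: divide_right_mono)
  qed
  have summable: "summable (\<lambda>n. c n * m n * z ^ n)" for z
    by (rule summable_powser_mult_bounded[OF entire m_bound])
  have "EK_pos 2 \<eta> \<beta> f x = x powr (2 * b) * (\<Sum>n. c n * m n * (x powr (2 * a)) ^ n)" if "0 < x" for x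
  proof (rule sums_unique2)
    show "(\<lambda>n. x powr (2 * b) * (c n * m n * (x powr (2 * a)) ^ n)) sums EK_pos 2 \<eta> \<beta> f x"
      unfolding m_def by (rule EK_pos_sums[OF f a \<eta> \<beta> that])
    show "(\<lambda>n. x powr (2 * b) * (c n * m n * (x powr (2 * a)) ^ n))
        sums (x powr (2 * b) * (\<Sum>n. c n * m n * (x powr (2 * a)) ^ n))"
      by (intro sums_mult summable_sums summable)
  qed
  moreover have "Gamma (\<eta> + b + a * real k + 1) / Gamma (\<eta> + b + a * real k + 1 + \<beta>) = m k" for k
    unfolding m_def by (rule Gamma_div_Gamma_add_eq_Beta[OF \<beta>])
  ultimately show ?thesis
    unfolding has_powr_expansion_def using summable by simp
qed

text \<open>
  For \<open>\<alpha> \<le> 0\<close> each recursion step multiplies the coefficient by \<open>\<eta>+\<alpha>+1+b+ak\<close>, and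
  \<open>y/\<Gamma>(y+1) = 1/\<Gamma>(y)\<close> (valid for every real \<open>y\<close>, poles included, since \<open>1/\<Gamma>\<close> is
  \<open>rGamma\<close>) keeps the multiplier in the same closed form.
\<close>

lemma has_powr_expansion_EK_rec:
  assumes "has_powr_expansion a b c f" "0 < a" "0 < \<eta> + b + 1" "0 < \<alpha> + real n"
  shows "has_powr_expansion a b
           (\<lambda>k. c k * (Gamma (\<eta> + b + a * real k + 1) / Gamma (\<eta> + b + a * real k + 1 + \<alpha>)))
           (EK_rec n 2 \<eta> \<alpha> f)"
  using assms
proof (induction n arbitrary: \<alpha> c f)
  case 0
  have "EK_rec 0 2 \<eta> \<alpha> f = EK_pos 2 \<eta> \<alpha> f"
    by (simp add: fun_eq_iff)
  then show ?case
    using has_powr_expansion_EK_pos[OF "0.prems"(1-3)] "0.prems"(4) by simp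
next
  case (Suc n)
  let ?p = "\<lambda>k. \<eta> + b + a * real k + 1"
  have "0 < \<alpha> + 1 + real n"
    using Suc.prems(4) by simp
  note IH = Suc.IH[OF _ Suc.prems(2,3) this]
  have "has_powr_expansion a b
      (\<lambda>k. (\<eta> + \<alpha> + 1) * (c k * (Gamma (?p k) / Gamma (?p k + (\<alpha> + 1))))
          + 1 / 2 * (c k * (2 * b + 2 * a * real k) * (Gamma (?p k) / Gamma (?p k + (\<alpha> + 1)))))
      (EK_rec (Suc n) 2 \<eta> \<alpha> f)"
    unfolding EK_rec.simps(2)
    by (rule has_powr_expansion_lincomb[OF IH[OF Suc.prems(1)] IH[OF has_powr_expansion_Euler[OF Suc.prems(1)]]])
  moreover have "(\<eta> + \<alpha> + 1) * (c k * (Gamma (?p k) / Gamma (?p k + (\<alpha> + 1))))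
          + 1 / 2 * (c k * (2 * b + 2 * a * real k) * (Gamma (?p k) / Gamma (?p k + (\<alpha> + 1))))
      = c k * (Gamma (?p k) / Gamma (?p k + \<alpha>))" for k
  proof -
    define R where "R = Gamma (?p k) / Gamma (?p k + (\<alpha> + 1))"
    have "(?p k + \<alpha>) * R = Gamma (?p k) / Gamma (?p k + \<alpha>)"
      unfolding R_def using mult_div_Gamma_plus1[of "?p k + \<alpha>" "Gamma (?p k)"] by (simp add: add_ac)
    moreover have "(\<eta> + \<alpha> + 1) * (c k * R) + 1 / 2 * (c k * (2 * b + 2 * a * real k) * R)
        = c k * ((?p k + \<alpha>) * R)"
      by (simp add: algebra_simps)
    ultimately show ?thesis
      unfolding R_def by simp
  qed
  ultimately show ?case
    by (rule has_powr_expansion_cong)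
qed

lemma has_powr_expansion_EK:
  assumes "has_powr_expansion a b c f" "0 < a" "0 < \<eta> + b + 1"
  shows "has_powr_expansion a b
           (\<lambda>k. c k * (Gamma (\<eta> + b + a * real k + 1) / Gamma (\<eta> + b + a * real k + 1 + \<alpha>)))
           (EK 2 \<eta> \<alpha> f)"
proof (cases "0 < \<alpha>")
  case True
  then have "EK 2 \<eta> \<alpha> f = EK_pos 2 \<eta> \<alpha> f"
    by (simp add: EK_def fun_eq_iff)
  then show ?thesis
    using has_powr_expansion_EK_pos[OF assms True] by (simp only:)
next
  case False
  then have "EK 2 \<eta> \<alpha> f = EK_rec (nat \<lfloor>- \<alpha>\<rfloor> + 1) 2 \<eta> \<alpha> f"
    by (simp add: EK_def fun_eq_iff del: EK_rec.simps)
  moreover have "0 < \<alpha> + real (nat \<lfloor>- \<alpha>\<rfloor> + 1)"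
    using False by linarith
  ultimately show ?thesis
    using has_powr_expansion_EK_rec[OF assms] by (simp only:)
qed

lemma has_powr_expansion_shift:
  assumes f: "has_powr_expansion a b c f" and g: "has_powr_expansion a b d g"
    and d: "d 0 = 0" "\<And>k. d (Suc k) = m * c k" and u: "0 < u"
  shows "g u = m * u powr (2 * a) * f u"
proof -
  define Z where "Z = u powr (2 * a)"
  have "(\<lambda>n. d n * Z ^ n) sums (\<Sum>n. d n * Z ^ n)"
    using g by (simp add: has_powr_expansion_def summable_sums)
  then have "(\<lambda>n. d (Suc n) * Z ^ Suc n) sums (\<Sum>n. d n * Z ^ n)"
    using sums_Suc_iff[of "\<lambda>n. d n * Z ^ n"] d(1) by simp
  then have "(\<lambda>n. m * Z * (c n * Z ^ n)) sums (\<Sum>n. d n * Z ^ n)"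
    by (simp add: d(2) mult_ac)
  moreover have "(\<lambda>n. m * Z * (c n * Z ^ n)) sums (m * Z * (\<Sum>n. c n * Z ^ n))"
    using f by (intro sums_mult summable_sums) (simp add: has_powr_expansion_def)
  ultimately have "(\<Sum>n. d n * Z ^ n) = m * Z * (\<Sum>n. c n * Z ^ n)"
    by (rule sums_unique2)
  then show ?thesis
    using f g u by (simp add: has_powr_expansion_def Z_def mult_ac)
qed

section \<open>The Klein--Gordon solution\<close>

definition KG_coeff :: "nat \<Rightarrow> real \<Rightarrow> real \<Rightarrow> nat \<Rightarrow> real" where
  "KG_coeff N \<alpha> q k =
     (- q\<^sup>2) ^ k / (Gamma (\<alpha> * real k + \<alpha> + (real N - 1) / 2) * Gamma (\<alpha> * real k + \<alpha>))"

lemma summable_KG_coeff: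
  assumes "0 < \<alpha>" "1 \<le> N"
  shows "summable (\<lambda>k. KG_coeff N \<alpha> q k * z ^ k)"
proof -
  have "0 < \<alpha> + (real N - 1) / 2"
    using assms by (simp add: add_pos_nonneg)
  from summable_div_Gamma_Gamma[OF assms(1) this assms(1), of "- q\<^sup>2 * z"]
  show ?thesis
    unfolding KG_coeff_def power_mult_distrib by (simp add: add.assoc)
qed

lemma KG_term_eq:
  assumes "0 < s"
  shows "KG_term N \<alpha> lam c s k
       = s powr (\<alpha> - 1) * (KG_coeff N \<alpha> (lam / (2 powr \<alpha> * c powr \<alpha>)) k * (s powr \<alpha>) ^ k)"
proof -
  have "s powr (\<alpha> * real k + \<alpha> - 1) = s powr (\<alpha> - 1) * (s powr \<alpha>) ^ k"
    using assms by (simp add: powr_power powr_add[symmetric] algebra_simps)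
  moreover have "x ^ (2 * k) * (-1) ^ k = (- x\<^sup>2) ^ k" for x :: real
    unfolding power_minus[of "x\<^sup>2"] power_mult by simp
  ultimately show ?thesis
    unfolding KG_term_def KG_coeff_def by (simp only:) (simp add: mult_ac)
qed

lemma KG_term_sums:
  assumes "0 < \<alpha>" "1 \<le> N" "0 < s"
  shows "KG_term N \<alpha> lam c s sums
           (s powr (\<alpha> - 1) * (\<Sum>k. KG_coeff N \<alpha> (lam / (2 powr \<alpha> * c powr \<alpha>)) k * (s powr \<alpha>) ^ k))"
  unfolding KG_term_eq[OF assms(3), abs_def]
  by (intro sums_mult summable_sums summable_KG_coeff assms(1,2))

lemma KG_sol_eq_multi_ML:
  assumes "0 < \<alpha>" "1 \<le> N" "0 < s"
  shows "KG_sol N \<alpha> lam c s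
       = s powr (\<alpha> - 1) * multi_ML [\<alpha>, \<alpha>] [\<alpha>, \<alpha> + (real N - 1) / 2]
           (- (lam * s powr (\<alpha> / 2) / (2 powr \<alpha> * c powr \<alpha>))\<^sup>2)"
proof -
  have argument: "- (lam * s powr (\<alpha> / 2) / (2 powr \<alpha> * c powr \<alpha>))\<^sup>2
      = - (lam / (2 powr \<alpha> * c powr \<alpha>))\<^sup>2 * s powr \<alpha>"
    using assms(3) by (simp add: power_mult_distrib power_divide powr_power)
  have "multi_ML [\<alpha>, \<alpha>] [\<alpha>, \<alpha> + (real N - 1) / 2] (- (lam * s powr (\<alpha> / 2) / (2 powr \<alpha> * c powr \<alpha>))\<^sup>2)
      = (\<Sum>k. KG_coeff N \<alpha> (lam / (2 powr \<alpha> * c powr \<alpha>)) k * (s powr \<alpha>) ^ k)"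
    unfolding multi_ML_def KG_coeff_def argument power_mult_distrib
    by (intro suminf_cong) (simp add: add.assoc mult_ac)
  then show ?thesis
    using sums_unique[OF KG_term_sums[OF assms]] by (simp add: KG_sol_def)
qed

lemma has_powr_expansion_KG_sol:
  assumes "0 < \<alpha>" "1 \<le> N"
  shows "has_powr_expansion \<alpha> (\<alpha> - 1) (KG_coeff N \<alpha> (lam / (2 powr \<alpha> * c powr \<alpha>)))
           (\<lambda>v. KG_sol N \<alpha> lam c (v\<^sup>2))"
  unfolding has_powr_expansion_def
proof (intro conjI allI impI)
  show "summable (\<lambda>n. KG_coeff N \<alpha> (lam / (2 powr \<alpha> * c powr \<alpha>)) n * z ^ n)" for z
    using assms by (rule summable_KG_coeff)
  fix u :: real assume u: "0 < u"
  then have "u\<^sup>2 = u powr 2"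
    by (simp add: powr_numeral)
  then have "(u\<^sup>2) powr r = u powr (2 * r)" for r
    by (simp add: powr_powr)
  then show "KG_sol N \<alpha> lam c (u\<^sup>2)
      = u powr (2 * (\<alpha> - 1)) * (\<Sum>n. KG_coeff N \<alpha> (lam / (2 powr \<alpha> * c powr \<alpha>)) n * (u powr (2 * \<alpha>)) ^ n)"
    using sums_unique[OF KG_term_sums[OF assms, of "u\<^sup>2" lam c]] u by (simp add: KG_sol_def)
qed

text \<open>The two Gamma quotients produced by the Erdelyi--Kober operators cancel the
  Gamma factors of \<open>KG_coeff\<close> at index \<open>k + 1\<close> down to those at index \<open>k\<close>; at index \<open>0\<close>
  the quotient \<open>\<Gamma>(\<alpha>)/\<Gamma>(0)\<close> vanishes.\<close>

lemma KG_coeff_EK_shift: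
  fixes q :: real
  assumes \<alpha>: "0 < \<alpha>" and N: "1 \<le> N"
  defines "\<eta> \<equiv> (real N - 1) / 2"
  defines "d \<equiv> \<lambda>k. KG_coeff N \<alpha> q k
      * (Gamma (\<eta> + (\<alpha> - 1) + \<alpha> * real k + 1) / Gamma (\<eta> + (\<alpha> - 1) + \<alpha> * real k + 1 + - \<alpha>))
      * (Gamma (0 + (\<alpha> - 1) + \<alpha> * real k + 1) / Gamma (0 + (\<alpha> - 1) + \<alpha> * real k + 1 + - \<alpha>))"
  shows "d 0 = 0" "d (Suc k) = - q\<^sup>2 * KG_coeff N \<alpha> q k"
proof -
  show "d 0 = 0"
    by (simp add: d_def)
  have \<eta>: "0 \<le> \<eta>"
    using N by (simp add: \<eta>_def)
  have args: "\<eta> + (\<alpha> - 1) + \<alpha> * real (Suc k) + 1 = \<alpha> * real (Suc k) + \<alpha> + \<eta>"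
    "\<eta> + (\<alpha> - 1) + \<alpha> * real (Suc k) + 1 + - \<alpha> = \<alpha> * real k + \<alpha> + \<eta>"
    "0 + (\<alpha> - 1) + \<alpha> * real (Suc k) + 1 = \<alpha> * real (Suc k) + \<alpha>"
    "0 + (\<alpha> - 1) + \<alpha> * real (Suc k) + 1 + - \<alpha> = \<alpha> * real k + \<alpha>"
    by (simp_all add: algebra_simps)
  have "0 < Gamma (\<alpha> * real (Suc k) + \<alpha> + \<eta>)" "0 < Gamma (\<alpha> * real k + \<alpha> + \<eta>)"
    "0 < Gamma (\<alpha> * real (Suc k) + \<alpha>)" "0 < Gamma (\<alpha> * real k + \<alpha>)"
    using \<alpha> \<eta> by (intro Gamma_real_pos add_pos_nonneg add_nonneg_pos; simp)+
  then show "d (Suc k) = - q\<^sup>2 * KG_coeff N \<alpha> q k"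
    unfolding d_def args KG_coeff_def \<eta>_def[symmetric] by (simp add: field_simps)
qed

lemma frac_bessel_op_KG_sol:
  assumes \<alpha>: "0 < \<alpha>" and N: "1 \<le> N" and c: "0 < c" and w: "0 < w"
  shows "frac_bessel_op N \<alpha> (\<lambda>v. KG_sol N \<alpha> lam c (v\<^sup>2)) w
       = - (lam\<^sup>2 / c powr (2 * \<alpha>)) * KG_sol N \<alpha> lam c (w\<^sup>2)"
proof -
  define q where "q = lam / (2 powr \<alpha> * c powr \<alpha>)"
  define \<eta> where "\<eta> = (real N - 1) / 2"
  define f where "f = (\<lambda>v. KG_sol N \<alpha> lam c (v\<^sup>2))"
  have f: "has_powr_expansion \<alpha> (\<alpha> - 1) (KG_coeff N \<alpha> q) f"
    unfolding f_def q_def using \<alpha> N by (rule has_powr_expansion_KG_sol)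
  have "0 \<le> \<eta>"
    using N by (simp add: \<eta>_def)
  then have "0 < \<eta> + (\<alpha> - 1) + 1"
    using \<alpha> by simp
  note inner = has_powr_expansion_EK[OF f \<alpha> this, of "- \<alpha>"]
  have "0 < 0 + (\<alpha> - 1) + 1"
    using \<alpha> by simp
  note outer = has_powr_expansion_EK[OF inner \<alpha> this, of "- \<alpha>"]
  have outer_eq: "EK 2 0 (- \<alpha>) (EK 2 \<eta> (- \<alpha>) f) w = - q\<^sup>2 * w powr (2 * \<alpha>) * f w"
    by (rule has_powr_expansion_shift[OF f outer KG_coeff_EK_shift[OF \<alpha> N, folded \<eta>_def] w])
  have four: "4 powr \<alpha> * q\<^sup>2 = lam\<^sup>2 / c powr (2 * \<alpha>)"
    using c by (simp add: q_def power_divide power_mult_distrib powr_power flip: powr_powr)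
  have cancel: "w powr (- 2 * \<alpha>) * w powr (2 * \<alpha>) = 1"
    using w by (simp add: powr_add[symmetric])
  have "frac_bessel_op N \<alpha> f w = 4 powr \<alpha> * w powr (- 2 * \<alpha>) * EK 2 0 (- \<alpha>) (EK 2 \<eta> (- \<alpha>) f) w"
    by (simp add: frac_bessel_op_def \<eta>_def)
  also have "\<dots> = - (4 powr \<alpha> * q\<^sup>2) * (w powr (- 2 * \<alpha>) * w powr (2 * \<alpha>)) * f w"
    unfolding outer_eq by (simp add: mult_ac)
  finally show ?thesis
    unfolding four cancel f_def by simp
qed

theorem theorem3p2:
  fixes N :: nat and \<alpha> lam c :: real
  assumes "N \<ge> 1" and "0 < \<alpha>" and "\<alpha> \<le> 1" and "c > 0"
  shows "(\<forall>w > 0. frac_bessel_op N \<alpha> (\<lambda>v. KG_sol N \<alpha> lam c (v\<^sup>2)) w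
                   = - (lam\<^sup>2 / c powr (2 * \<alpha>)) * KG_sol N \<alpha> lam c (w\<^sup>2))
       \<and> (\<forall>(x :: nat \<Rightarrow> real) (t :: real).
             c\<^sup>2 * t\<^sup>2 - (\<Sum>j = 1..N. (x j)\<^sup>2) > 0 \<longrightarrow>
             (let s = c\<^sup>2 * t\<^sup>2 - (\<Sum>j = 1..N. (x j)\<^sup>2) in
                summable (KG_term N \<alpha> lam c s)
              \<and> KG_sol N \<alpha> lam c s
                  = s powr (\<alpha> - 1) *
                    multi_ML [\<alpha>, \<alpha>] [\<alpha>, \<alpha> + (real N - 1) / 2]
                      (- (lam * s powr (\<alpha> / 2) / (2 powr \<alpha> * c powr \<alpha>))\<^sup>2)))"
  using frac_bessel_op_KG_sol[OF assms(2,1,4)]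
    sums_summable[OF KG_term_sums[OF assms(2,1)]] KG_sol_eq_multi_ML[OF assms(2,1)]
  by (simp add: Let_def)

end
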